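(* Let $V$ be a commutative unital quantale whose underlying lattice is a frame. Let $(X,a,+)$ be a $V$-group and $S$ a subgroup of $X$, equipped with the restriction of $a$ to $S\times S$. Then the inclusion $V$-functor $S\hookrightarrow X$ is open if and only if it is proper.
   Context: A commutative unital quantale $V$ is a complete lattice with a commutative associative operation $\otimes$ with unit $k$ preserving arbitrary joins in each variable. A $V$-category $(X,a)$: $a\colon X\times X\to V$ with $k\le a(x,x)$ and $a(x,x')\otimes a(x',x'')\le a(x,x'')$. A $V$-group $(X,a,+)$ is a $V$-category with a group structure (additive, not necessarily abelian) such that $a(x_1,x_2)\otimes a(x_1',x_2')\le a(x_1+x_1',x_2+x_2')$. A $V$-functor $f\colon(X,a)\to(Y,b)$ (a map with $a(x,x')\le b(f(x),f(x'))$) is proper if $b(f(x),y)=\bigvee\{a(x,x')\mid f(x')=y\}$ for all $x\in X$, $y\in Y$, and open if $b(y,f(x))=\bigvee\{a(x',x)\mid f(x')=y\}$ for all $x\in X$, $y\in Y$ (empty joins being $\bot$). *)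

theory Defs
  imports "HOL-Algebra.Group"
begin

definition comm_quantale :: "('v::complete_lattice \<Rightarrow> 'v \<Rightarrow> 'v) \<Rightarrow> 'v \<Rightarrow> bool" where
  "comm_quantale t k \<longleftrightarrow>
     (\<forall>u v w. t (t u v) w = t u (t v w)) \<and>
     (\<forall>u v. t u v = t v u) \<and>
     (\<forall>u. t k u = u \<and> t u k = u) \<and>
     (\<forall>u A. t u (Sup A) = Sup (t u ` A)) \<and>
     (\<forall>u A. t (Sup A) u = Sup ((\<lambda>v. t v u) ` A))"

definition is_frame :: "'v::complete_lattice itself \<Rightarrow> bool" where
  "is_frame _ \<longleftrightarrow> (\<forall>(u::'v) A. inf u (Sup A) = Sup (inf u ` A))"

definition vcat :: "('v::complete_lattice \<Rightarrow> 'v \<Rightarrow> 'v) \<Rightarrow> 'v \<Rightarrow> 'x set \<Rightarrow> ('x \<Rightarrow> 'x \<Rightarrow> 'v) \<Rightarrow> bool" where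
  "vcat t k X a \<longleftrightarrow>
     (\<forall>x\<in>X. k \<le> a x x) \<and>
     (\<forall>x\<in>X. \<forall>x'\<in>X. \<forall>x''\<in>X. t (a x x') (a x' x'') \<le> a x x'')"

text \<open>V-group: the group operation (written multiplicatively in HOL-Algebra) is compatible.\<close>
definition vgroup :: "('v::complete_lattice \<Rightarrow> 'v \<Rightarrow> 'v) \<Rightarrow> 'v \<Rightarrow> ('x, 'm) monoid_scheme \<Rightarrow> ('x \<Rightarrow> 'x \<Rightarrow> 'v) \<Rightarrow> bool" where
  "vgroup t k G a \<longleftrightarrow> group G \<and> vcat t k (carrier G) a \<and>
     (\<forall>x1\<in>carrier G. \<forall>x2\<in>carrier G. \<forall>y1\<in>carrier G. \<forall>y2\<in>carrier G.
        t (a x1 x2) (a y1 y2) \<le> a (x1 \<otimes>\<^bsub>G\<^esub> y1) (x2 \<otimes>\<^bsub>G\<^esub> y2))"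

definition vfunctor :: "'x set \<Rightarrow> ('x \<Rightarrow> 'x \<Rightarrow> 'v::complete_lattice) \<Rightarrow> 'y set \<Rightarrow> ('y \<Rightarrow> 'y \<Rightarrow> 'v) \<Rightarrow> ('x \<Rightarrow> 'y) \<Rightarrow> bool" where
  "vfunctor X a Y b f \<longleftrightarrow> f ` X \<subseteq> Y \<and> (\<forall>x\<in>X. \<forall>x'\<in>X. a x x' \<le> b (f x) (f x'))"

definition vproper :: "'x set \<Rightarrow> ('x \<Rightarrow> 'x \<Rightarrow> 'v::complete_lattice) \<Rightarrow> 'y set \<Rightarrow> ('y \<Rightarrow> 'y \<Rightarrow> 'v) \<Rightarrow> ('x \<Rightarrow> 'y) \<Rightarrow> bool" where
  "vproper X a Y b f \<longleftrightarrow> vfunctor X a Y b f \<and>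
     (\<forall>x\<in>X. \<forall>y\<in>Y. b (f x) y = Sup {a x x' | x'. x' \<in> X \<and> f x' = y})"

definition vopen :: "'x set \<Rightarrow> ('x \<Rightarrow> 'x \<Rightarrow> 'v::complete_lattice) \<Rightarrow> 'y set \<Rightarrow> ('y \<Rightarrow> 'y \<Rightarrow> 'v) \<Rightarrow> ('x \<Rightarrow> 'y) \<Rightarrow> bool" where
  "vopen X a Y b f \<longleftrightarrow> vfunctor X a Y b f \<and>
     (\<forall>x\<in>X. \<forall>y\<in>Y. b y (f x) = Sup {a x' x | x'. x' \<in> X \<and> f x' = y})"

end

theory Submission
  imports Defs
begin

text \<open>Along the inclusion of a subset, the join in the definition of proper (open) has at most one
  term, so properness says exactly that no point outside S is reachable from S, and openness that
  S is not reachable from outside. In a V-group inversion reverses distances,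
  a(x, y) \<le> a(-y, -x), and a subgroup is closed under inversion in both directions, so the two
  conditions are interchanged by inversion.\<close>

lemma comm_quantale_tensor_mono:
  assumes q: "comm_quantale t k" and "u \<le> u'" and "v \<le> v'"
  shows "t u v \<le> t u' v'"
proof -
  have right: "t w x \<le> t w x'" if "x \<le> x'" for w x x'
  proof -
    have "t w x' = t w (Sup {x, x'})" using that by (simp add: sup_absorb2)
    also have "\<dots> = Sup (t w ` {x, x'})" using q by (simp only: comm_quantale_def)
    also have "\<dots> = sup (t w x) (t w x')" by simp
    finally show ?thesis by (simp add: le_iff_sup)
  qed
  have comm: "t w x = t x w" for w x using q by (simp add: comm_quantale_def)
  have "t u v \<le> t u v'" using right \<open>v \<le> v'\<close> .
  also have "\<dots> \<le> t u' v'" using right[OF \<open>u \<le> u'\<close>] by (metis comm)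
  finally show ?thesis .
qed

lemma vgroup_le_inv_swap:
  fixes G (structure)
  assumes q: "comm_quantale t k" and vg: "vgroup t k G a"
    and x: "x \<in> carrier G" and y: "y \<in> carrier G"
  shows "a x y \<le> a (inv y) (inv x)"
proof -
  interpret group G using vg by (simp add: vgroup_def)
  have refl: "k \<le> a z z" if "z \<in> carrier G" for z
    using vg that by (simp add: vgroup_def vcat_def)
  have compat: "t (a x1 x2) (a y1 y2) \<le> a (x1 \<otimes> y1) (x2 \<otimes> y2)"
    if "x1 \<in> carrier G" "x2 \<in> carrier G" "y1 \<in> carrier G" "y2 \<in> carrier G" for x1 x2 y1 y2
    using vg that by (simp add: vgroup_def)
  have unit: "t k u = u" "t u k = u" for u using q by (simp_all add: comm_quantale_def)
  have "a x y = t (a x y) k" by (simp add: unit)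
  also have "\<dots> \<le> t (a x y) (a (inv x) (inv x))"
    using comm_quantale_tensor_mono[OF q order_refl refl] x by simp
  also have "\<dots> \<le> a (x \<otimes> inv x) (y \<otimes> inv x)" using x y by (intro compat) simp_all
  also have "\<dots> = t k (a \<one> (y \<otimes> inv x))" using x by (simp add: unit)
  also have "\<dots> \<le> t (a (inv y) (inv y)) (a \<one> (y \<otimes> inv x))"
    using comm_quantale_tensor_mono[OF q refl order_refl] y by simp
  also have "\<dots> \<le> a (inv y \<otimes> \<one>) (inv y \<otimes> (y \<otimes> inv x))" using x y by (intro compat) simp_all
  also have "\<dots> = a (inv y) (inv x)" using x y by (simp add: m_assoc[symmetric])
  finally show ?thesis .
qed

lemma vproper_inclusion_iff:
  assumes "S \<subseteq> Y"
  shows "vproper S a Y a id \<longleftrightarrow> (\<forall>x\<in>S. \<forall>y\<in>Y - S. a x y = bot)"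
proof -
  have "{a x x' | x'. x' \<in> S \<and> id x' = y} = (if y \<in> S then {a x y} else {})" for x y
    by auto
  then show ?thesis using assms by (auto simp: vproper_def vfunctor_def)
qed

lemma vopen_inclusion_iff:
  assumes "S \<subseteq> Y"
  shows "vopen S a Y a id \<longleftrightarrow> (\<forall>x\<in>S. \<forall>y\<in>Y - S. a y x = bot)"
proof -
  have "{a x' x | x'. x' \<in> S \<and> id x' = y} = (if y \<in> S then {a y x} else {})" for x y
    by auto
  then show ?thesis using assms by (auto simp: vopen_def vfunctor_def)
qed

lemma vgroup_subgroup_bot_from_iff_bot_to:
  fixes G (structure)
  assumes q: "comm_quantale t k" and vg: "vgroup t k G a" and H: "subgroup S G"
  shows "(\<forall>x\<in>S. \<forall>y\<in>carrier G - S. a x y = bot) \<longleftrightarrow> (\<forall>x\<in>S. \<forall>y\<in>carrier G - S. a y x = bot)"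
proof -
  interpret group G using vg by (simp add: vgroup_def)
  have inv_mem: "inv z \<in> S \<longleftrightarrow> z \<in> S" if "z \<in> carrier G" for z
    using H that by (metis inv_inv subgroup.m_inv_closed)
  have S: "S \<subseteq> carrier G" using H by (rule subgroup.subset)
  have swap: "a x y \<le> a (inv y) (inv x)" if "x \<in> carrier G" "y \<in> carrier G" for x y
    using vgroup_le_inv_swap[OF q vg that] .
  show ?thesis
  proof (intro iffI ballI)
    fix x y assume bot_from: "\<forall>x\<in>S. \<forall>y\<in>carrier G - S. a x y = bot"
      and x: "x \<in> S" and y: "y \<in> carrier G - S"
    have "a y x \<le> a (inv x) (inv y)" using swap x y S by blast
    also have "\<dots> = bot" using bot_from x y S inv_mem by blast
    finally show "a y x = bot" by (simp add: bot_unique)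
  next
    fix x y assume bot_to: "\<forall>x\<in>S. \<forall>y\<in>carrier G - S. a y x = bot"
      and x: "x \<in> S" and y: "y \<in> carrier G - S"
    have "a x y \<le> a (inv y) (inv x)" using swap x y S by blast
    also have "\<dots> = bot" using bot_to x y S inv_mem by blast
    finally show "a x y = bot" by (simp add: bot_unique)
  qed
qed

theorem corollary5p7:
  fixes t :: "'v::complete_lattice \<Rightarrow> 'v \<Rightarrow> 'v" and k :: 'v
    and G :: "('x, 'm) monoid_scheme" and a :: "'x \<Rightarrow> 'x \<Rightarrow> 'v" and S :: "'x set"
  assumes "comm_quantale t k"
    and "is_frame TYPE('v)"
    and "vgroup t k G a"
    and "subgroup S G"
  shows "vopen S a (carrier G) a id \<longleftrightarrow> vproper S a (carrier G) a id"
proof -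
  have "S \<subseteq> carrier G" using assms(4) by (rule subgroup.subset)
  then show ?thesis
    using vgroup_subgroup_bot_from_iff_bot_to[OF assms(1,3,4)]
    by (simp add: vopen_inclusion_iff vproper_inclusion_iff)
qed

end
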